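(* Let $p_1,p_2\ge 0$ with $p_1+p_2\le 1$ and $n\ge 1$. Then \[ 400\,E(\mathrm{STN}(RPC(n,p_1,p_2)))=441\,E(\mathrm{STN}(RSC(n,p_1,p_2)))-1035n-441. \]
   Context: For a graph $G$, $\mathrm{STN}(G)$ is the number of nonempty subtrees of $G$ (subgraphs that are trees, single vertices included). A polyphenylene chain with $n$ hexagons consists of pairwise vertex-disjoint hexagons $H_1,\dots,H_n$ where for each $i<n$ one vertex of $H_i$ is joined to one vertex of $H_{i+1}$ by a single cut edge, with no other edges. A spiro chain with $n$ hexagons consists of hexagons $H_1,\dots,H_n$ where $H_i$ and $H_{i+1}$ share exactly one vertex (cut vertex), non-consecutive hexagons are disjoint. In either kind of chain, for $2\le i\le n-1$, the two vertices of $H_i$ used for connecting to $H_{i-1}$ and $H_{i+1}$ are at distance $1$ (ortho), $2$ (meta) or $3$ (para) in $H_i$. The random chains $RPC(n,p_1,p_2)$ (polyphenylene) and $RSC(n,p_1,p_2)$ (spiro) are built by stepwise addition of terminal hexagons: for $n\le2$ the chain is unique, and at each step $i=3,\dots,n$ the new hexagon $H_i$ is attached (by a cut edge, resp. by sharing a vertex) at a vertex of $H_{i-1}$ at distance $1$ from the vertex of $H_{i-1}$ connected to $H_{i-2}$ with probability $p_1$, at distance $2$ with probability $p_2$, and at distance $3$ with probability $1-p_1-p_2$, independently at each step. *)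

theory Defs
  imports Complex_Main
begin

text \<open>A (simple) graph is given by a vertex set V and a set E of edges, each
edge being a two-element set of vertices.\<close>

definition is_subgraph :: "'a set \<Rightarrow> 'a set set \<Rightarrow> 'a set \<Rightarrow> 'a set set \<Rightarrow> bool" where
  "is_subgraph V E S F \<longleftrightarrow> S \<subseteq> V \<and> F \<subseteq> E \<and> (\<forall>e\<in>F. e \<subseteq> S)"

definition graph_connected :: "'a set \<Rightarrow> 'a set set \<Rightarrow> bool" where
  "graph_connected S F \<longleftrightarrow> S \<noteq> {} \<and>
     (\<forall>u\<in>S. \<forall>v\<in>S. (u, v) \<in> {(x, y). {x, y} \<in> F}\<^sup>*)"

definition has_cycle :: "'a set \<Rightarrow> 'a set set \<Rightarrow> bool" where
  "has_cycle S F \<longleftrightarrow> (\<exists>vs. length vs \<ge> 3 \<and> distinct vs \<and> set vs \<subseteq> S \<and>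
     (\<forall>i < length vs. {vs ! i, vs ! ((i + 1) mod length vs)} \<in> F))"

definition is_tree :: "'a set \<Rightarrow> 'a set set \<Rightarrow> bool" where
  "is_tree S F \<longleftrightarrow> graph_connected S F \<and> \<not> has_cycle S F"

definition STN :: "'a set \<Rightarrow> 'a set set \<Rightarrow> nat" where
  "STN V E = card {(S, F). is_subgraph V E S F \<and> S \<noteq> {} \<and> is_tree S F}"

text \<open>Hexagons are indexed 0..n-1; vertex (i,j), j<6, is position j on hexagon i,
positions in cyclic order. For 1 <= i, the vertex of hexagon i used to connect to
hexagon i-1 is position 0; the vertex of hexagon i used to connect to hexagon i+1
is position \<open>ds ! (i - 1)\<close> for 1 <= i <= n-2 (at distance \<open>ds ! (i-1)\<close>
in {1,2,3} from position 0), and position 0 for hexagon 0.\<close>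

definition exit_pos :: "nat list \<Rightarrow> nat \<Rightarrow> nat" where
  "exit_pos ds i = (if i = 0 then 0 else ds ! (i - 1))"

definition hex_vertices :: "nat \<Rightarrow> (nat \<times> nat) set" where
  "hex_vertices n = {(i, j). i < n \<and> j < 6}"

definition hex_edges :: "nat \<Rightarrow> (nat \<times> nat) set set" where
  "hex_edges n = {{(i, j), (i, (j + 1) mod 6)} | i j. i < n \<and> j < 6}"

text \<open>Polyphenylene chain: disjoint hexagons joined by cut edges.\<close>
definition PC_vertices :: "nat \<Rightarrow> nat list \<Rightarrow> (nat \<times> nat) set" where
  "PC_vertices n ds = hex_vertices n"

definition PC_edges :: "nat \<Rightarrow> nat list \<Rightarrow> (nat \<times> nat) set set" where
  "PC_edges n ds = hex_edges n \<union>
     {{(i, exit_pos ds i), (i + 1, 0)} | i. i + 1 < n}"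

text \<open>Spiro chain: position 0 of hexagon i (i >= 1) is identified with the exit
vertex of hexagon i-1.\<close>
definition spiro_map :: "nat list \<Rightarrow> nat \<times> nat \<Rightarrow> nat \<times> nat" where
  "spiro_map ds v = (if snd v = 0 \<and> fst v > 0 then (fst v - 1, exit_pos ds (fst v - 1)) else v)"

definition SC_vertices :: "nat \<Rightarrow> nat list \<Rightarrow> (nat \<times> nat) set" where
  "SC_vertices n ds = spiro_map ds ` hex_vertices n"

definition SC_edges :: "nat \<Rightarrow> nat list \<Rightarrow> (nat \<times> nat) set set" where
  "SC_edges n ds = (\<lambda>e. spiro_map ds ` e) ` hex_edges n"

text \<open>Admissible sequences of choices made at steps 3..n: \<open>ds ! k\<close> is the
distance chosen at step k+3.\<close>
definition choice_seqs :: "nat \<Rightarrow> nat list set" where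
  "choice_seqs n = {ds. length ds = n - 2 \<and> set ds \<subseteq> {1, 2, 3}}"

definition step_prob :: "real \<Rightarrow> real \<Rightarrow> nat \<Rightarrow> real" where
  "step_prob p1 p2 d = (if d = 1 then p1 else if d = 2 then p2 else 1 - p1 - p2)"

definition seq_prob :: "real \<Rightarrow> real \<Rightarrow> nat list \<Rightarrow> real" where
  "seq_prob p1 p2 ds = (\<Prod>d\<leftarrow>ds. step_prob p1 p2 d)"

definition E_STN_RPC :: "nat \<Rightarrow> real \<Rightarrow> real \<Rightarrow> real" where
  "E_STN_RPC n p1 p2 = (\<Sum>ds\<in>choice_seqs n.
      seq_prob p1 p2 ds * real (STN (PC_vertices n ds) (PC_edges n ds)))"

definition E_STN_RSC :: "nat \<Rightarrow> real \<Rightarrow> real \<Rightarrow> real" where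
  "E_STN_RSC n p1 p2 = (\<Sum>ds\<in>choice_seqs n.
      seq_prob p1 p2 ds * real (STN (SC_vertices n ds) (SC_edges n ds)))"

end

theory Submission
  imports Defs
begin

text \<open>Both chains grow by attaching a hexagon at a single vertex: a spiro chain
  directly at the exit vertex of the last hexagon, a polyphenylene chain after first
  attaching a pendant edge \<open>u w\<close> at the exit vertex \<open>u\<close> and then gluing the hexagon at \<open>w\<close>.
  The subtrees of two graphs glued at a cut vertex \<open>v\<close> are the subtrees of either side
  avoiding \<open>v\<close> and the unions of two subtrees through \<open>v\<close>.  A hexagon has 36 subtrees
  (its arcs), 21 of them through each vertex.  Writing \<open>a x\<close> and \<open>b x\<close> for the numbers of
  subtrees of the two chains through position \<open>x\<close> of the last hexagon, induction on the
  number of hexagons gives, for every choice of attachment positions,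
  \<open>441 STN(S\<^sub>n) = 400 STN(P\<^sub>n) + 1035 n + 441\<close> and \<open>21 b x = 20 a x + 21\<close>; the number of
  subtrees of a hexagon through two given vertices enters both recurrences alike and
  cancels.  The identity of expectations follows because the probabilities of all choice
  sequences sum to 1.\<close>

definition subtrees :: "'a set \<Rightarrow> 'a set set \<Rightarrow> ('a set \<times> 'a set set) set" where
  "subtrees V E = {(S, F). is_subgraph V E S F \<and> S \<noteq> {} \<and> is_tree S F}"

definition subtrees_through :: "'a set \<Rightarrow> 'a set set \<Rightarrow> 'a \<Rightarrow> ('a set \<times> 'a set set) set" where
  "subtrees_through V E x = {t \<in> subtrees V E. x \<in> fst t}"

lemma STN_eq_card_subtrees: "STN V E = card (subtrees V E)"
  by (simp add: STN_def subtrees_def)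

definition adj :: "'a set set \<Rightarrow> ('a \<times> 'a) set" where
  "adj F = {(x, y). {x, y} \<in> F}"

lemma graph_connected_iff:
  "graph_connected S F \<longleftrightarrow> S \<noteq> {} \<and> (\<forall>u\<in>S. \<forall>v\<in>S. (u, v) \<in> (adj F)\<^sup>*)"
  by (simp add: graph_connected_def adj_def)

lemma rtrancl_adj_sym: "(x, y) \<in> (adj F)\<^sup>* \<Longrightarrow> (y, x) \<in> (adj F)\<^sup>*"
proof -
  have "sym ((adj F)\<^sup>*)"
    by (rule sym_rtrancl) (auto simp: adj_def sym_def insert_commute)
  then show "(x, y) \<in> (adj F)\<^sup>* \<Longrightarrow> (y, x) \<in> (adj F)\<^sup>*"
    by (rule symD)
qed

lemma rtrancl_adj_mono: "F \<subseteq> F' \<Longrightarrow> (x, y) \<in> (adj F)\<^sup>* \<Longrightarrow> (x, y) \<in> (adj F')\<^sup>*"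
  by (rule rtrancl_mono[THEN subsetD, of "adj F"]) (auto simp: adj_def)

lemma graph_connectedI:
  assumes "v \<in> S" and "\<And>y. y \<in> S \<Longrightarrow> (v, y) \<in> (adj F)\<^sup>*"
  shows "graph_connected S F"
  using assms by (auto simp: graph_connected_iff intro: rtrancl_trans rtrancl_adj_sym)

lemma in_subtrees_iff:
  "(S, F) \<in> subtrees V E \<longleftrightarrow> S \<subseteq> V \<and> F \<subseteq> E \<and> (\<forall>e\<in>F. e \<subseteq> S) \<and> is_tree S F"
  by (auto simp: subtrees_def is_subgraph_def is_tree_def graph_connected_def)

lemma subtree_nonempty: "t \<in> subtrees V E \<Longrightarrow> fst t \<noteq> {}"
  by (auto simp: subtrees_def)

lemma subtrees_mono: "t \<in> subtrees V E \<Longrightarrow> V \<subseteq> V' \<Longrightarrow> E \<subseteq> E' \<Longrightarrow> t \<in> subtrees V' E'"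
  by (cases t) (auto simp: in_subtrees_iff)

lemma closed_under_rtrancl:
  assumes "(x, y) \<in> R\<^sup>*" "x \<in> A" "\<And>u w. (u, w) \<in> R \<Longrightarrow> u \<in> A \<Longrightarrow> w \<in> A"
  shows "y \<in> A"
  using assms by (induction rule: rtrancl_induct) auto

section \<open>Cycles and trees glued at a vertex\<close>

lemma has_cycle_mono: "has_cycle S F \<Longrightarrow> S \<subseteq> S' \<Longrightarrow> F \<subseteq> F' \<Longrightarrow> has_cycle S' F'"
  unfolding has_cycle_def by blast

lemma has_cycle_card:
  assumes "has_cycle S F" "finite S"
  shows "3 \<le> card S"
proof -
  obtain vs where vs: "3 \<le> length vs" "distinct vs" "set vs \<subseteq> S"
    using assms(1) unfolding has_cycle_def by blast
  have "length vs = card (set vs)" using vs(2) by (simp add: distinct_card)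
  also have "\<dots> \<le> card S" using vs(3) assms(2) by (rule card_mono[rotated])
  finally show ?thesis using vs(1) by linarith
qed

lemma Suc_mod_eq: "i < L \<Longrightarrow> Suc i mod L = (if Suc i = L then 0 else Suc i)"
  by (cases "Suc i = L") auto

lemma Suc_mod_inj:
  assumes "(i::nat) < L" "j < L" "(i + 1) mod L = (j + 1) mod L"
  shows "i = j"
  using assms by (auto simp: Suc_mod_eq split: if_splits)

lemma cycle_successor_distinct:
  assumes "distinct vs" "2 \<le> length vs" "i < length vs"
  shows "vs ! i \<noteq> vs ! ((i + 1) mod length vs)"
proof -
  have "(i + 1) mod length vs \<noteq> i" "(i + 1) mod length vs < length vs"
    using assms(2,3) Suc_mod_eq[OF assms(3)] by auto
  then show ?thesis using assms(1,3) by (simp add: nth_eq_iff_index_eq)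
qed

lemma cyclic_list_exit:
  assumes "p < length vs" "vs ! p \<in> A" "q < length vs" "vs ! q \<notin> A"
  shows "\<exists>i<length vs. vs ! i \<in> A \<and> vs ! ((i + 1) mod length vs) \<notin> A"
proof (rule ccontr)
  let ?L = "length vs"
  assume "\<not> ?thesis"
  then have step: "vs ! i \<in> A \<Longrightarrow> i < ?L \<Longrightarrow> vs ! ((i + 1) mod ?L) \<in> A" for i by blast
  have L: "0 < ?L" using assms(1) by linarith
  have "vs ! ((p + k) mod ?L) \<in> A" for k
  proof (induction k)
    case 0 then show ?case using assms by simp
  next
    case (Suc k)
    have "vs ! (Suc ((p + k) mod ?L) mod ?L) \<in> A"
      using step[of "(p + k) mod ?L"] Suc L by simp
    then show ?case by (simp add: mod_Suc_eq)
  qed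
  from this[of "q + ?L - p"] have "vs ! ((q + ?L) mod ?L) \<in> A" using assms(1) by simp
  then show False using assms(3,4) by simp
qed

lemma cycle_within_side:
  assumes cut: "S1 \<inter> S2 = {v}" and F2: "\<forall>e\<in>F2. e \<subseteq> S2"
    and vs: "3 \<le> length vs" "distinct vs" "set vs \<subseteq> S1"
    and edges: "\<forall>i<length vs. {vs ! i, vs ! ((i + 1) mod length vs)} \<in> F1 \<union> F2"
  shows "has_cycle S1 F1"
proof -
  have edges1: "{vs ! i, vs ! ((i + 1) mod length vs)} \<in> F1" if i: "i < length vs" for i
  proof (rule ccontr)
    let ?e = "{vs ! i, vs ! ((i + 1) mod length vs)}"
    assume "?e \<notin> F1"
    have "(i + 1) mod length vs < length vs" using i by (intro mod_less_divisor) linarith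
    then have "?e \<subseteq> S1" using vs(3) i by (auto dest: nth_mem)
    moreover have "?e \<subseteq> S2" using \<open>?e \<notin> F1\<close> edges F2 i by blast
    ultimately have "?e \<subseteq> {v}" using cut by blast
    then show False using cycle_successor_distinct[OF vs(2) _ i] vs(1) by simp
  qed
  show ?thesis unfolding has_cycle_def using vs edges1 by blast
qed

lemma cycle_not_across_cut_vertex:
  assumes cut: "S1 \<inter> S2 = {v}" and F1: "\<forall>e\<in>F1. e \<subseteq> S1" and F2: "\<forall>e\<in>F2. e \<subseteq> S2"
    and vs: "distinct vs"
    and edges: "\<forall>i<length vs. {vs ! i, vs ! ((i + 1) mod length vs)} \<in> F1 \<union> F2"
    and p: "p < length vs" "vs ! p \<in> S2 - {v}" and q: "q < length vs" "vs ! q \<in> S1 - {v}"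
  shows False
proof -
  let ?L = "length vs"
  txt \<open>A cycle can only leave \<open>S - {v}\<close> through the cut vertex \<open>v\<close>; it has to
    leave both \<open>S1 - {v}\<close> and \<open>S2 - {v}\<close>, so \<open>v\<close> would have two predecessors.\<close>
  have exit_at_cut: "vs ! ((i + 1) mod ?L) = v"
    if "S \<inter> S' = {v}" "\<forall>e\<in>F. e \<subseteq> S" "\<forall>e\<in>F'. e \<subseteq> S'" "F \<union> F' = F1 \<union> F2"
      "i < ?L" "vs ! i \<in> S - {v}" "vs ! ((i + 1) mod ?L) \<notin> S - {v}" for S S' F F' i
  proof -
    have "{vs ! i, vs ! ((i + 1) mod ?L)} \<in> F \<union> F'" using edges that(4,5) by simp
    moreover have "vs ! i \<notin> S'" using that(1,6) by blast
    ultimately have "{vs ! i, vs ! ((i + 1) mod ?L)} \<in> F" using that(3) by blast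
    then have "vs ! ((i + 1) mod ?L) \<in> S" using that(2) by blast
    then show ?thesis using that(7) by blast
  qed
  have "vs ! p \<notin> S1 - {v}" "vs ! q \<notin> S2 - {v}" using p q cut by blast+
  then obtain i j where
    i: "i < ?L" "vs ! i \<in> S1 - {v}" "vs ! ((i + 1) mod ?L) \<notin> S1 - {v}" and
    j: "j < ?L" "vs ! j \<in> S2 - {v}" "vs ! ((j + 1) mod ?L) \<notin> S2 - {v}"
    using cyclic_list_exit[OF q p(1)] cyclic_list_exit[OF p q(1)] by metis
  have "vs ! ((i + 1) mod ?L) = vs ! ((j + 1) mod ?L)"
    using exit_at_cut[OF cut F1 F2 refl i] exit_at_cut[of S2 S1 F2 F1, OF _ F2 F1 _ j] cut
    by (simp add: Int_commute Un_commute)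
  moreover have "(i + 1) mod ?L < ?L" "(j + 1) mod ?L < ?L"
    using i(1) by (intro mod_less_divisor; linarith)+
  ultimately have "(i + 1) mod ?L = (j + 1) mod ?L"
    using nth_eq_iff_index_eq[OF vs] by blast
  then have "i = j" using i(1) j(1) by (rule Suc_mod_inj[rotated 2])
  then show False using i(2) j(2) cut by blast
qed

lemma has_cycle_Un_cut_vertex:
  assumes cut: "S1 \<inter> S2 = {v}" and F1: "\<forall>e\<in>F1. e \<subseteq> S1" and F2: "\<forall>e\<in>F2. e \<subseteq> S2"
    and cycle: "has_cycle (S1 \<union> S2) (F1 \<union> F2)"
  shows "has_cycle S1 F1 \<or> has_cycle S2 F2"
proof -
  obtain vs where vs: "3 \<le> length vs" "distinct vs" "set vs \<subseteq> S1 \<union> S2"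
    and edges: "\<forall>i<length vs. {vs ! i, vs ! ((i + 1) mod length vs)} \<in> F1 \<union> F2"
    using cycle unfolding has_cycle_def by blast
  consider "set vs \<subseteq> S1" | "set vs \<subseteq> S2"
    | p q where "p < length vs" "vs ! p \<in> S2 - {v}" "q < length vs" "vs ! q \<in> S1 - {v}"
    using vs(3) cut by (auto simp: subset_iff in_set_conv_nth)
  then show ?thesis
  proof cases
    case 1
    then show ?thesis using cycle_within_side[OF cut F2 vs(1,2) _ edges] by blast
  next
    case 2
    then show ?thesis
      using cycle_within_side[of S2 S1 v F1 vs F2] cut F1 vs(1,2) edges
      by (simp add: Int_commute Un_commute)
  next
    case 3
    then show ?thesis using cycle_not_across_cut_vertex[OF cut F1 F2 vs(2) edges] by blast
  qed
qed

lemma is_tree_Un_cut_vertex: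
  assumes cut: "S1 \<inter> S2 = {v}" and F1: "\<forall>e\<in>F1. e \<subseteq> S1" and F2: "\<forall>e\<in>F2. e \<subseteq> S2"
    and trees: "is_tree S1 F1" "is_tree S2 F2"
  shows "is_tree (S1 \<union> S2) (F1 \<union> F2)"
proof -
  have "(v, y) \<in> (adj (F1 \<union> F2))\<^sup>*" if "y \<in> S1 \<union> S2" for y
  proof -
    have "(v, y) \<in> (adj F1)\<^sup>* \<or> (v, y) \<in> (adj F2)\<^sup>*"
      using that trees cut by (auto simp: is_tree_def graph_connected_iff)
    then show ?thesis by (auto intro: rtrancl_adj_mono)
  qed
  then have "graph_connected (S1 \<union> S2) (F1 \<union> F2)"
    using cut by (intro graph_connectedI[of v]) auto
  moreover have "\<not> has_cycle (S1 \<union> S2) (F1 \<union> F2)"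
    using has_cycle_Un_cut_vertex[OF cut F1 F2] trees by (auto simp: is_tree_def)
  ultimately show ?thesis by (simp add: is_tree_def)
qed

lemma is_tree_singleton: "is_tree {v} {}"
  using has_cycle_card[of "{v}" "{}"] by (auto simp: is_tree_def graph_connected_iff)

lemma is_tree_edge:
  assumes "u \<noteq> w" shows "is_tree {u, w} {{u, w}}"
proof -
  have "(u, w) \<in> (adj {{u, w}})\<^sup>*" by (auto simp: adj_def)
  then have "graph_connected {u, w} {{u, w}}"
    by (intro graph_connectedI[of u]) auto
  moreover have "\<not> has_cycle {u, w} {{u, w}}"
    using has_cycle_card[of "{u, w}" "{{u, w}}"] assms by fastforce
  ultimately show ?thesis by (simp add: is_tree_def)
qed

section \<open>Gluing simple graphs at a cut vertex\<close>

lemma card_filter_split: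
  "finite A \<Longrightarrow> card {x \<in> A. P x} + card {x \<in> A. \<not> P x} = card A"
  by (subst card_Un_disjoint[symmetric]) (auto intro: arg_cong[where f = card])

locale simple_graph =
  fixes V :: "'a set" and E :: "'a set set"
  assumes finite_vertices: "finite V"
    and edge_subset: "e \<in> E \<Longrightarrow> e \<subseteq> V"
    and card_edge: "e \<in> E \<Longrightarrow> card e = 2"
begin

lemma finite_subtrees: "finite (subtrees V E)"
proof (rule finite_subset)
  show "subtrees V E \<subseteq> Pow V \<times> Pow (Pow V)"
    using edge_subset by (fastforce simp: in_subtrees_iff)
  show "finite (Pow V \<times> Pow (Pow V))" using finite_vertices by simp
qed

end

lemma simple_graph_Un:
  "simple_graph V1 E1 \<Longrightarrow> simple_graph V2 E2 \<Longrightarrow> simple_graph (V1 \<union> V2) (E1 \<union> E2)"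
  by (auto simp: simple_graph_def)

lemma simple_graph_edge: "u \<noteq> w \<Longrightarrow> simple_graph {u, w} {{u, w}}"
  by (simp add: simple_graph_def)

definition glue :: "('a set \<times> 'a set set) \<times> ('a set \<times> 'a set set) \<Rightarrow> 'a set \<times> 'a set set" where
  "glue = (\<lambda>((S1, F1), (S2, F2)). (S1 \<union> S2, F1 \<union> F2))"

locale cut_vertex = G1: simple_graph V1 E1 + G2: simple_graph V2 E2
  for V1 :: "'a set" and E1 and V2 and E2 +
  fixes v :: 'a
  assumes cut: "V1 \<inter> V2 = {v}"
begin

lemma swap: "cut_vertex V2 E2 V1 E1 v"
  using cut G1.simple_graph_axioms G2.simple_graph_axioms
  by (simp add: cut_vertex_def cut_vertex_axioms_def Int_commute)

lemma edge_not_across: "e \<in> E1 \<Longrightarrow> \<not> e \<subseteq> V2" "e \<in> E2 \<Longrightarrow> \<not> e \<subseteq> V1"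
proof -
  have "\<not> e \<subseteq> {v}" if "card e = 2" for e
    using that card_mono[of "{v}" e] by auto
  then show "e \<in> E1 \<Longrightarrow> \<not> e \<subseteq> V2" "e \<in> E2 \<Longrightarrow> \<not> e \<subseteq> V1"
    using cut G1.edge_subset G1.card_edge G2.edge_subset G2.card_edge by blast+
qed

lemma reach_within_side:
  assumes "(v, y) \<in> (adj F)\<^sup>*" "F \<subseteq> E1 \<union> E2"
  shows "y \<in> V1 \<longrightarrow> (v, y) \<in> (adj (F \<inter> E1))\<^sup>*"
  using assms(1)
proof (induction rule: rtrancl_induct)
  case base
  then show ?case by simp
next
  case (step y z)
  then have yz: "{y, z} \<in> F" by (simp add: adj_def)
  show ?case
  proof
    assume z: "z \<in> V1"
    show "(v, z) \<in> (adj (F \<inter> E1))\<^sup>*"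
    proof (cases "{y, z} \<in> E1")
      case True
      then have "(v, y) \<in> (adj (F \<inter> E1))\<^sup>*" using step.IH G1.edge_subset by blast
      moreover have "(y, z) \<in> adj (F \<inter> E1)" using True yz by (simp add: adj_def)
      ultimately show ?thesis by (rule rtrancl_into_rtrancl)
    next
      case False
      then have "{y, z} \<in> E2" using yz assms(2) by blast
      then have "z \<in> V1 \<inter> V2" using z G2.edge_subset by blast
      then show ?thesis using cut by simp
    qed
  qed
qed

lemma restrict_subtree:
  assumes "(S, F) \<in> subtrees (V1 \<union> V2) (E1 \<union> E2)" "v \<in> S"
  shows "(S \<inter> V1, F \<inter> E1) \<in> subtrees V1 E1"
proof -
  have F: "F \<subseteq> E1 \<union> E2" "\<forall>e\<in>F. e \<subseteq> S" and tree: "is_tree S F"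
    using assms(1) by (simp_all add: in_subtrees_iff)
  have "(v, y) \<in> (adj (F \<inter> E1))\<^sup>*" if "y \<in> S \<inter> V1" for y
    using reach_within_side[OF _ F(1)] tree assms(2) that
    by (auto simp: is_tree_def graph_connected_iff)
  then have "graph_connected (S \<inter> V1) (F \<inter> E1)"
    using assms(2) cut by (intro graph_connectedI[of v]) auto
  moreover have "\<not> has_cycle (S \<inter> V1) (F \<inter> E1)"
    using tree has_cycle_mono[of "S \<inter> V1" "F \<inter> E1" S F] by (auto simp: is_tree_def)
  ultimately show ?thesis using F G1.edge_subset by (auto simp: in_subtrees_iff is_tree_def)
qed

lemma subtree_avoiding_cut:
  assumes "(S, F) \<in> subtrees (V1 \<union> V2) (E1 \<union> E2)" "v \<notin> S" "x \<in> S" "x \<in> V1"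
  shows "(S, F) \<in> subtrees V1 E1"
proof -
  have F: "F \<subseteq> E1 \<union> E2" "\<forall>e\<in>F. e \<subseteq> S" and tree: "is_tree S F"
    using assms(1) by (simp_all add: in_subtrees_iff)
  have closed: "b \<in> S \<inter> V1" if "(a, b) \<in> adj F" "a \<in> S \<inter> V1" for a b
  proof -
    have ab: "{a, b} \<in> F" using that(1) by (simp add: adj_def)
    then have "b \<in> S" using F(2) by blast
    moreover have "{a, b} \<in> E1"
    proof (rule ccontr)
      assume "{a, b} \<notin> E1"
      then have "a \<in> V1 \<inter> V2" using ab F(1) G2.edge_subset that(2) by blast
      then show False using cut that(2) assms(2) by simp
    qed
    then have "b \<in> V1" using G1.edge_subset by blast
    ultimately show ?thesis by simp
  qed
  have "S \<subseteq> V1"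
  proof
    fix y assume "y \<in> S"
    then have "(x, y) \<in> (adj F)\<^sup>*" using tree assms(3) by (auto simp: is_tree_def graph_connected_iff)
    then show "y \<in> V1" using closed assms(3,4) closed_under_rtrancl[of x y "adj F" "S \<inter> V1"] by blast
  qed
  moreover have "F \<subseteq> E1" using F edge_not_across(2) \<open>S \<subseteq> V1\<close> by blast
  ultimately show ?thesis using F tree by (simp add: in_subtrees_iff)
qed

lemma glue_subtrees:
  assumes "(S1, F1) \<in> subtrees V1 E1" "v \<in> S1" "(S2, F2) \<in> subtrees V2 E2" "v \<in> S2"
  shows "(S1 \<union> S2, F1 \<union> F2) \<in> subtrees (V1 \<union> V2) (E1 \<union> E2)"
proof -
  have "S1 \<inter> S2 = {v}" using assms cut by (auto simp: in_subtrees_iff)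
  then have "is_tree (S1 \<union> S2) (F1 \<union> F2)"
    using assms(1,3) by (intro is_tree_Un_cut_vertex) (auto simp: in_subtrees_iff)
  then show ?thesis using assms(1,3) by (auto simp: in_subtrees_iff)
qed

lemma subtree_through_cut_is_glued:
  assumes t: "(S, F) \<in> subtrees (V1 \<union> V2) (E1 \<union> E2)" and v: "v \<in> S"
  shows "(S, F) \<in> glue ` (subtrees_through V1 E1 v \<times> subtrees_through V2 E2 v)"
proof -
  interpret swapped: cut_vertex V2 E2 V1 E1 v by (rule swap)
  have "(S \<inter> V1, F \<inter> E1) \<in> subtrees_through V1 E1 v"
    using restrict_subtree t v cut by (auto simp: subtrees_through_def)
  moreover have "(S \<inter> V2, F \<inter> E2) \<in> subtrees_through V2 E2 v"
    using swapped.restrict_subtree[of S F] t v cut by (auto simp: subtrees_through_def Un_commute)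
  moreover have "(S, F) = glue ((S \<inter> V1, F \<inter> E1), (S \<inter> V2, F \<inter> E2))"
    using t by (auto simp: glue_def in_subtrees_iff)
  ultimately show ?thesis by blast
qed

lemma subtree_avoiding_cut_in_side:
  assumes t: "(S, F) \<in> subtrees (V1 \<union> V2) (E1 \<union> E2)" and v: "v \<notin> S"
  shows "(S, F) \<in> subtrees V1 E1 \<or> (S, F) \<in> subtrees V2 E2"
proof -
  interpret swapped: cut_vertex V2 E2 V1 E1 v by (rule swap)
  obtain x where x: "x \<in> S" using subtree_nonempty[OF t] by auto
  then have "x \<in> V1 \<or> x \<in> V2" using t by (auto simp: in_subtrees_iff)
  then show ?thesis
    using subtree_avoiding_cut[OF t v x] swapped.subtree_avoiding_cut[of S F x] t v x
    by (auto simp: Un_commute)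
qed

lemma subtrees_Un:
  "subtrees (V1 \<union> V2) (E1 \<union> E2) =
     {t \<in> subtrees V1 E1. v \<notin> fst t} \<union> {t \<in> subtrees V2 E2. v \<notin> fst t} \<union>
     glue ` (subtrees_through V1 E1 v \<times> subtrees_through V2 E2 v)"
  (is "?T = ?A \<union> ?B \<union> glue ` ?X")
proof (intro equalityI subsetI)
  fix t assume "t \<in> ?T"
  then show "t \<in> ?A \<union> ?B \<union> glue ` ?X"
    using subtree_through_cut_is_glued subtree_avoiding_cut_in_side by (cases t) auto
next
  fix t assume "t \<in> ?A \<union> ?B \<union> glue ` ?X"
  then consider "t \<in> ?A" | "t \<in> ?B" | "t \<in> glue ` ?X" by blast
  then show "t \<in> ?T"
  proof cases
    case 3
    then show ?thesis using glue_subtrees by (auto simp: glue_def subtrees_through_def)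
  qed (auto intro: subtrees_mono)
qed

lemma inj_on_glue: "inj_on glue (subtrees_through V1 E1 v \<times> subtrees_through V2 E2 v)"
proof (rule inj_on_inverseI[where g = "\<lambda>(S, F). ((S \<inter> V1, F \<inter> E1), (S \<inter> V2, F \<inter> E2))"])
  fix p assume p: "p \<in> subtrees_through V1 E1 v \<times> subtrees_through V2 E2 v"
  obtain S1 F1 S2 F2 where p_eq: "p = ((S1, F1), (S2, F2))" by (metis prod.collapse)
  have sub: "S1 \<subseteq> V1" "F1 \<subseteq> E1" "v \<in> S1" "S2 \<subseteq> V2" "F2 \<subseteq> E2" "v \<in> S2"
    and within: "\<forall>e\<in>F1. e \<subseteq> S1" "\<forall>e\<in>F2. e \<subseteq> S2"
    using p by (auto simp: p_eq subtrees_through_def in_subtrees_iff)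
  have "S2 \<inter> V1 \<subseteq> S1" "S1 \<inter> V2 \<subseteq> S2" using sub cut by auto
  moreover have "e \<notin> E1" if "e \<in> F2" for e
    using edge_not_across(1)[of e] within(2) sub(4) that by blast
  moreover have "e \<notin> E2" if "e \<in> F1" for e
    using edge_not_across(2)[of e] within(1) sub(1) that by blast
  ultimately show "(\<lambda>(S, F). ((S \<inter> V1, F \<inter> E1), (S \<inter> V2, F \<inter> E2))) (glue p) = p"
    using sub by (auto simp: p_eq glue_def)
qed

lemma card_subtrees_Un_filter:
  "card {t \<in> subtrees (V1 \<union> V2) (E1 \<union> E2). P t} =
     card {t \<in> subtrees V1 E1. v \<notin> fst t \<and> P t} + card {t \<in> subtrees V2 E2. v \<notin> fst t \<and> P t} +
     card {p \<in> subtrees_through V1 E1 v \<times> subtrees_through V2 E2 v. P (glue p)}"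
proof -
  let ?A = "{t \<in> subtrees V1 E1. v \<notin> fst t \<and> P t}" and ?B = "{t \<in> subtrees V2 E2. v \<notin> fst t \<and> P t}"
    and ?X = "{p \<in> subtrees_through V1 E1 v \<times> subtrees_through V2 E2 v. P (glue p)}"
  have glued: "v \<in> fst (glue p)" if "p \<in> ?X" for p
    using that by (auto simp: glue_def subtrees_through_def)
  have "?A \<inter> ?B = {}"
  proof -
    have "fst t \<subseteq> {v}" if "t \<in> subtrees V1 E1" "t \<in> subtrees V2 E2" for t
      using that cut by (cases t) (auto simp: in_subtrees_iff)
    then show ?thesis using subtree_nonempty by fastforce
  qed
  moreover have "(?A \<union> ?B) \<inter> glue ` ?X = {}" using glued by auto
  moreover have "finite ?A" "finite ?B" "finite (glue ` ?X)"
    using G1.finite_subtrees G2.finite_subtrees by (auto simp: subtrees_through_def)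
  moreover have "{t \<in> subtrees (V1 \<union> V2) (E1 \<union> E2). P t} = ?A \<union> ?B \<union> glue ` ?X"
    unfolding subtrees_Un by auto
  ultimately have "card {t \<in> subtrees (V1 \<union> V2) (E1 \<union> E2). P t} = card ?A + card ?B + card (glue ` ?X)"
    by (simp add: card_Un_disjoint)
  also have "card (glue ` ?X) = card ?X"
    by (rule card_image, rule inj_on_subset[OF inj_on_glue]) auto
  finally show ?thesis .
qed

lemma card_subtrees_Un:
  "card (subtrees (V1 \<union> V2) (E1 \<union> E2)) + card (subtrees_through V1 E1 v) + card (subtrees_through V2 E2 v) =
     card (subtrees V1 E1) + card (subtrees V2 E2) +
     card (subtrees_through V1 E1 v) * card (subtrees_through V2 E2 v)"
  using card_subtrees_Un_filter[of "\<lambda>_. True"]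
    card_filter_split[OF G1.finite_subtrees, of "\<lambda>t. v \<in> fst t"]
    card_filter_split[OF G2.finite_subtrees, of "\<lambda>t. v \<in> fst t"]
  by (simp add: subtrees_through_def card_cartesian_product)

lemma card_subtrees_through_Un:
  assumes "x \<in> V2"
  shows "card (subtrees_through (V1 \<union> V2) (E1 \<union> E2) x) =
    card {t \<in> subtrees V2 E2. v \<notin> fst t \<and> x \<in> fst t} +
    card (subtrees_through V1 E1 v) * card {t \<in> subtrees_through V2 E2 v. x \<in> fst t}"
proof -
  have x_in_V1: "x \<in> S \<Longrightarrow> S \<subseteq> V1 \<Longrightarrow> x = v" for S using assms cut by blast
  then have none: "{t \<in> subtrees V1 E1. v \<notin> fst t \<and> x \<in> fst t} = {}"
    by (force simp: in_subtrees_iff)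
  have glued: "{p \<in> subtrees_through V1 E1 v \<times> subtrees_through V2 E2 v. x \<in> fst (glue p)} =
      subtrees_through V1 E1 v \<times> {t \<in> subtrees_through V2 E2 v. x \<in> fst t}"
    using x_in_V1 by (force simp: glue_def subtrees_through_def in_subtrees_iff)
  show ?thesis
    using card_subtrees_Un_filter[of "\<lambda>t. x \<in> fst t"] unfolding none glued
    by (simp add: subtrees_through_def card_cartesian_product)
qed

end

section \<open>Paths and hexagons\<close>

definition path_edges :: "(nat \<Rightarrow> 'a) \<Rightarrow> nat \<Rightarrow> nat \<Rightarrow> 'a set set" where
  "path_edges g a b = (\<lambda>i. {g i, g (Suc i)}) ` {a..<b}"

lemma path_edges_shift:
  assumes "a \<le> b"
  shows "g ` {a..b} = (\<lambda>i. g (a + i)) ` {0..b - a}"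
    and "path_edges g a b = path_edges (\<lambda>i. g (a + i)) 0 (b - a)"
proof -
  have eq: "{a..b} = plus a ` {0..b - a}" "{a..<b} = plus a ` {0..<b - a}"
    using assms by simp_all
  show "g ` {a..b} = (\<lambda>i. g (a + i)) ` {0..b - a}"
    unfolding eq(1) image_image ..
  show "path_edges g a b = path_edges (\<lambda>i. g (a + i)) 0 (b - a)"
    unfolding path_edges_def eq(2) image_image by simp
qed

lemma is_tree_path:
  assumes "a \<le> b" "inj_on g {a..b}"
  shows "is_tree (g ` {a..b}) (path_edges g a b)"
  using assms
proof (induction b)
  case 0
  then show ?case using is_tree_singleton by (simp add: path_edges_def)
next
  case (Suc b)
  show ?case
  proof (cases "a = Suc b")
    case True
    then show ?thesis using is_tree_singleton by (simp add: path_edges_def)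
  next
    case False
    then have ab: "a \<le> b" using Suc.prems(1) by simp
    have "inj_on g {a..b}" using Suc.prems(2) by (rule inj_on_subset) auto
    then have tree: "is_tree (g ` {a..b}) (path_edges g a b)" using Suc.IH ab by blast
    have "g (Suc b) \<notin> g ` {a..b}"
    proof
      assume "g (Suc b) \<in> g ` {a..b}"
      then obtain x where "x \<in> {a..b}" "g (Suc b) = g x" by auto
      then show False using inj_onD[OF Suc.prems(2), of "Suc b" x] ab by auto
    qed
    moreover have "g b \<in> g ` {a..b}" using ab by simp
    ultimately have cut: "g ` {a..b} \<inter> {g b, g (Suc b)} = {g b}" and neq: "g b \<noteq> g (Suc b)"
      by auto
    have "is_tree (g ` {a..b} \<union> {g b, g (Suc b)}) (path_edges g a b \<union> {{g b, g (Suc b)}})"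
      using tree is_tree_edge[OF neq] by (intro is_tree_Un_cut_vertex[OF cut]) (auto simp: path_edges_def)
    moreover have "g ` {a..Suc b} = g ` {a..b} \<union> {g b, g (Suc b)}"
      using ab by (auto simp: atLeastAtMostSuc_conv)
    moreover have "path_edges g a (Suc b) = path_edges g a b \<union> {{g b, g (Suc b)}}"
      using ab by (auto simp: path_edges_def atLeastLessThanSuc)
    ultimately show ?thesis by simp
  qed
qed

lemma path_prefix_closed:
  assumes inj: "inj_on g {0..m}" and F: "F \<subseteq> path_edges g 0 m"
    and gap: "{g i, g (Suc i)} \<notin> F" "i < m"
    and xy: "(x, y) \<in> adj F" "x \<in> g ` {0..i}"
  shows "y \<in> g ` {0..i}"
proof -
  obtain k where k: "k < m" "{x, y} = {g k, g (Suc k)}"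
    using xy(1) F by (auto simp: adj_def path_edges_def)
  obtain l where l: "l \<le> i" "x = g l" using xy(2) by auto
  have inj_eq: "g p = g q \<longleftrightarrow> p = q" if "p \<le> m" "q \<le> m" for p q
    using inj_on_eq_iff[OF inj] that by simp
  from k(2) consider "x = g k" "y = g (Suc k)" | "x = g (Suc k)" "y = g k"
    by (auto simp: doubleton_eq_iff)
  then show ?thesis
  proof cases
    case 1
    then have "l = k" using l k(1) gap(2) inj_eq by simp
    moreover have "k \<noteq> i" using gap(1) xy(1) k(2) by (auto simp: adj_def)
    ultimately show ?thesis using 1 l by auto
  next
    case 2
    then have "l = Suc k" using l k(1) gap(2) inj_eq by simp
    then show ?thesis using 2 l by auto
  qed
qed

lemma path_vertices_covered: "g ` {a..b} \<subseteq> insert (g b) (\<Union> (path_edges g a b))"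
proof
  fix x assume "x \<in> g ` {a..b}"
  then obtain j where "a \<le> j" "j \<le> b" "x = g j" by auto
  then show "x \<in> insert (g b) (\<Union> (path_edges g a b))"
    by (cases "j = b") (auto simp: path_edges_def)
qed

lemma path_edges_reached:
  assumes inj: "inj_on g {0..m}" and F: "F \<subseteq> path_edges g 0 m"
    and reach: "(g a, g b) \<in> (adj F)\<^sup>*" and b: "b \<le> m"
  shows "path_edges g a b \<subseteq> F"
proof
  fix e assume "e \<in> path_edges g a b"
  then obtain i where i: "a \<le> i" "i < b" and e: "e = {g i, g (Suc i)}" by (auto simp: path_edges_def)
  show "e \<in> F"
  proof (rule ccontr)
    assume "e \<notin> F"
    then have gap: "{g i, g (Suc i)} \<notin> F" using e by simp
    have "i < m" using i b by simp
    have "g b \<in> g ` {0..i}"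
    proof (rule closed_under_rtrancl[OF reach])
      show "g a \<in> g ` {0..i}" using i(1) by simp
      show "\<And>u w. (u, w) \<in> adj F \<Longrightarrow> u \<in> g ` {0..i} \<Longrightarrow> w \<in> g ` {0..i}"
        by (rule path_prefix_closed[OF inj F gap \<open>i < m\<close>])
    qed
    then obtain l where "l \<le> i" "g b = g l" by auto
    then show False using inj_on_eq_iff[OF inj, of b l] i b by simp
  qed
qed

lemma connected_subgraph_of_path:
  assumes inj: "inj_on g {0..m}" and S: "S \<subseteq> g ` {0..m}" and F: "F \<subseteq> path_edges g 0 m"
    and within: "\<forall>e\<in>F. e \<subseteq> S" and conn: "graph_connected S F"
  obtains a b where "a \<le> b" "b \<le> m" "S = g ` {a..b}" "F = path_edges g a b"
proof -
  define I where "I = {i \<in> {0..m}. g i \<in> S}"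
  have S_eq: "S = g ` I" using S by (auto simp: I_def)
  have "finite I" by (simp add: I_def)
  have "I \<noteq> {}" using conn S_eq by (auto simp: graph_connected_def)
  define a b where "a = Min I" and "b = Max I"
  have ab: "a \<in> I" "b \<in> I" "\<And>i. i \<in> I \<Longrightarrow> a \<le> i \<and> i \<le> b"
    using \<open>finite I\<close> \<open>I \<noteq> {}\<close> unfolding a_def b_def by auto
  have "(g a, g b) \<in> (adj F)\<^sup>*" using conn ab(1,2) by (auto simp: I_def graph_connected_iff)
  then have edge_in: "path_edges g a b \<subseteq> F"
    using path_edges_reached[OF inj F] ab(2) by (simp add: I_def)
  have "S = g ` {a..b}"
  proof
    show "S \<subseteq> g ` {a..b}" using S_eq ab(3) by auto
    have "\<Union> (path_edges g a b) \<subseteq> S" using edge_in within by (intro Union_least) blast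
    moreover have "g b \<in> S" using ab(2) by (simp add: I_def)
    ultimately have "insert (g b) (\<Union> (path_edges g a b)) \<subseteq> S" by simp
    with path_vertices_covered show "g ` {a..b} \<subseteq> S" by (rule subset_trans)
  qed
  moreover have "F = path_edges g a b"
  proof
    show "path_edges g a b \<subseteq> F" by (rule edge_in)
    show "F \<subseteq> path_edges g a b"
    proof
      fix e assume e: "e \<in> F"
      then obtain k where k: "k < m" "e = {g k, g (Suc k)}" using F by (auto simp: path_edges_def)
      then have "k \<in> I" "Suc k \<in> I" using e within by (auto simp: I_def)
      then show "e \<in> path_edges g a b" using ab(3) k(2) by (force simp: path_edges_def)
    qed
  qed
  moreover have "a \<le> b" "b \<le> m" using ab by (auto simp: I_def)
  ultimately show ?thesis using that by blast
qed

definition hexagon_vertices :: "(nat \<Rightarrow> 'a) \<Rightarrow> 'a set" where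
  "hexagon_vertices h = h ` {0..<6}"

definition hexagon_edges :: "(nat \<Rightarrow> 'a) \<Rightarrow> 'a set set" where
  "hexagon_edges h = (\<lambda>j. {h j, h ((j + 1) mod 6)}) ` {0..<6}"

definition rotation :: "(nat \<Rightarrow> 'a) \<Rightarrow> nat \<Rightarrow> nat \<Rightarrow> 'a" where
  "rotation h c i = h ((c + i) mod 6)"

definition hexagon_arcs :: "(nat \<Rightarrow> 'a) \<Rightarrow> ('a set \<times> 'a set set) set" where
  "hexagon_arcs h = (\<lambda>(c, k). (rotation h c ` {0..k}, path_edges (rotation h c) 0 k)) ` ({0..<6} \<times> {0..<6})"

lemma simple_graph_hexagon:
  assumes "inj_on h {0..<6}"
  shows "simple_graph (hexagon_vertices h) (hexagon_edges h)"
proof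
  fix e assume "e \<in> hexagon_edges h"
  then obtain j where j: "j < 6" "e = {h j, h ((j + 1) mod 6)}" by (auto simp: hexagon_edges_def)
  then have "h j \<noteq> h ((j + 1) mod 6)"
    using inj_on_eq_iff[OF assms, of j "(j + 1) mod 6"] by (auto simp: Suc_mod_eq)
  then show "card e = 2" using j by simp
  show "e \<subseteq> hexagon_vertices h" using j by (auto simp: hexagon_vertices_def)
qed (simp add: hexagon_vertices_def)

lemma has_cycle_hexagon:
  assumes "inj_on h {0..<6}"
  shows "has_cycle (hexagon_vertices h) (hexagon_edges h)"
  unfolding has_cycle_def
proof (intro exI conjI)
  show "distinct (map h [0..<6])" using assms by (simp add: distinct_map)
  show "\<forall>i<length (map h [0..<6]).
      {map h [0..<6] ! i, map h [0..<6] ! ((i + 1) mod length (map h [0..<6]))} \<in> hexagon_edges h"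
    by (auto simp: hexagon_edges_def)
qed (auto simp: hexagon_vertices_def)

lemma rotation_permutes: "(\<lambda>i. (c + i) mod 6) ` {0..<6} = {0..<(6::nat)}"
proof (intro equalityI subsetI)
  fix k :: nat assume k: "k \<in> {0..<6}"
  define i where "i = (k + 6 - c mod 6) mod 6"
  have "c mod 6 < 6" by simp
  then have sum: "c mod 6 + (k + 6 - c mod 6) = k + 6" by linarith
  have "(c + i) mod 6 = (c mod 6 + i) mod 6" by (simp only: mod_add_left_eq)
  also have "\<dots> = (c mod 6 + (k + 6 - c mod 6)) mod 6"
    unfolding i_def by (simp only: mod_add_right_eq)
  also have "\<dots> = k" using k by (simp only: sum) simp
  finally have "k = (c + i) mod 6" ..
  moreover have "i \<in> {0..<6}" by (simp add: i_def)
  ultimately show "k \<in> (\<lambda>i. (c + i) mod 6) ` {0..<6}" by (rule image_eqI)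
qed auto

lemma inj_on_rotation: "inj_on h {0..<6} \<Longrightarrow> inj_on (rotation h c) {0..<6}"
  unfolding rotation_def
  using eq_card_imp_inj_on[of "{0..<6}" "\<lambda>i. (c + i) mod 6"] rotation_permutes[of c]
  by (auto intro: comp_inj_on[unfolded comp_def])

lemma image_rotation: "rotation h c ` {0..<6} = hexagon_vertices h"
  using rotation_permutes[of c] unfolding rotation_def hexagon_vertices_def
  by (metis image_image)

lemma rotation_edge: "{rotation h c i, rotation h c (Suc i)} \<in> hexagon_edges h"
proof -
  have "(c + Suc i) mod 6 = ((c + i) mod 6 + 1) mod 6" by (simp add: mod_Suc_eq)
  then show ?thesis unfolding rotation_def hexagon_edges_def by force
qed

lemma hexagon_edge_on_path:
  assumes "j < 6" "k < 6" "k \<noteq> j"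
  obtains i where "i < 5" "rotation h (Suc j) i = h k" "rotation h (Suc j) (Suc i) = h ((k + 1) mod 6)"
proof -
  have "k \<in> (\<lambda>i. (Suc j + i) mod 6) ` {0..<6}"
    using rotation_permutes[of "Suc j"] assms(2) by simp
  then obtain i where i: "i < 6" "(Suc j + i) mod 6 = k" by auto
  have "(Suc j + 5) mod 6 = j" using assms(1) by simp
  then have "i < 5" using i assms(3) by (cases "i = 5") auto
  moreover have "(Suc j + Suc i) mod 6 = (k + 1) mod 6"
    using i(2) mod_Suc_eq[of "Suc j + i" 6] by simp
  ultimately show ?thesis using that i(2) by (simp add: rotation_def)
qed

lemma subtree_of_hexagon_misses_edge:
  assumes inj: "inj_on h {0..<6}" and t: "(S, F) \<in> subtrees (hexagon_vertices h) (hexagon_edges h)"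
  obtains j where "j < 6" "{h j, h ((j + 1) mod 6)} \<notin> F"
proof -
  have F: "\<forall>e\<in>F. e \<subseteq> S" and tree: "is_tree S F" using t by (simp_all add: in_subtrees_iff)
  have "\<not> hexagon_edges h \<subseteq> F"
  proof
    assume all: "hexagon_edges h \<subseteq> F"
    have "h i \<in> S" if "i < 6" for i
    proof -
      have "{h i, h ((i + 1) mod 6)} \<in> F" using all that by (auto simp: hexagon_edges_def)
      then show ?thesis using F by blast
    qed
    then have "hexagon_vertices h \<subseteq> S" by (auto simp: hexagon_vertices_def)
    then have "has_cycle S F" using has_cycle_mono[OF has_cycle_hexagon[OF inj] _ all] by blast
    then show False using tree by (simp add: is_tree_def)
  qed
  then obtain e where "e \<in> hexagon_edges h" "e \<notin> F" by blast
  then show ?thesis using that by (auto simp: hexagon_edges_def)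
qed

lemma subtree_of_hexagon_is_arc:
  assumes inj: "inj_on h {0..<6}" and t: "(S, F) \<in> subtrees (hexagon_vertices h) (hexagon_edges h)"
  shows "(S, F) \<in> hexagon_arcs h"
proof -
  have S: "S \<subseteq> hexagon_vertices h" and F: "F \<subseteq> hexagon_edges h" "\<forall>e\<in>F. e \<subseteq> S"
    and tree: "is_tree S F"
    using t by (simp_all add: in_subtrees_iff)
  obtain j where j: "j < 6" "{h j, h ((j + 1) mod 6)} \<notin> F"
    using subtree_of_hexagon_misses_edge[OF inj t] .
  define g where "g = rotation h (Suc j)"
  have six: "{0..<6} = {0..5::nat}" by auto
  have inj_g: "inj_on g {0..5}" using inj_on_rotation[OF inj] by (simp add: g_def six)
  have S_g: "S \<subseteq> g ` {0..5}" using S image_rotation[of h "Suc j"] by (simp add: g_def six)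
  have F_g: "F \<subseteq> path_edges g 0 5"
  proof
    fix e assume e: "e \<in> F"
    then obtain k where k: "k < 6" "e = {h k, h ((k + 1) mod 6)}"
      using F(1) by (auto simp: hexagon_edges_def)
    then have "k \<noteq> j" using e j(2) by auto
    with j(1) k(1) obtain i where "i < 5" "g i = h k" "g (Suc i) = h ((k + 1) mod 6)"
      unfolding g_def by (rule hexagon_edge_on_path)
    then have "e = {g i, g (Suc i)}" "i \<in> {0..<5}" using k(2) by auto
    then show "e \<in> path_edges g 0 5" unfolding path_edges_def by (rule image_eqI)
  qed
  obtain a b where ab: "a \<le> b" "b \<le> 5" "S = g ` {a..b}" "F = path_edges g a b"
    using connected_subgraph_of_path[OF inj_g S_g F_g F(2)] tree by (auto simp: is_tree_def)
  define c where "c = (Suc j + a) mod 6"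
  have rot: "(\<lambda>i. g (a + i)) = rotation h c"
    by (auto simp: g_def c_def rotation_def mod_add_left_eq add.assoc)
  have "(S, F) = (rotation h c ` {0..b - a}, path_edges (rotation h c) 0 (b - a))"
    using path_edges_shift[OF ab(1), of g] ab(3,4) unfolding rot by simp
  moreover have "(c, b - a) \<in> {0..<6} \<times> {0..<6}" using ab(2) by (simp add: c_def)
  ultimately show ?thesis unfolding hexagon_arcs_def by force
qed

lemma hexagon_arc_is_subtree:
  assumes inj: "inj_on h {0..<6}" and c: "c < 6" and k: "k < 6"
  shows "(rotation h c ` {0..k}, path_edges (rotation h c) 0 k) \<in> subtrees (hexagon_vertices h) (hexagon_edges h)"
proof -
  have "inj_on (rotation h c) {0..k}"
    using inj_on_rotation[OF inj] by (rule inj_on_subset) (use k in auto)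
  then have "is_tree (rotation h c ` {0..k}) (path_edges (rotation h c) 0 k)"
    by (intro is_tree_path) simp_all
  moreover have "rotation h c ` {0..k} \<subseteq> hexagon_vertices h"
    using image_rotation[of h c] k by auto
  moreover have "path_edges (rotation h c) 0 k \<subseteq> hexagon_edges h"
    using rotation_edge by (auto simp: path_edges_def)
  moreover have "\<forall>e\<in>path_edges (rotation h c) 0 k. e \<subseteq> rotation h c ` {0..k}"
    by (auto simp: path_edges_def)
  ultimately show ?thesis by (simp add: in_subtrees_iff)
qed

lemma subtrees_hexagon:
  assumes inj: "inj_on h {0..<6}"
  shows "subtrees (hexagon_vertices h) (hexagon_edges h) = hexagon_arcs h"
  using subtree_of_hexagon_is_arc[OF inj] hexagon_arc_is_subtree[OF inj]
  by (fastforce simp: hexagon_arcs_def)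

definition map_subgraph :: "('a \<Rightarrow> 'b) \<Rightarrow> 'a set \<times> 'a set set \<Rightarrow> 'b set \<times> 'b set set" where
  "map_subgraph f t = (f ` fst t, (`) f ` snd t)"

lemma hexagon_arcs_map: "hexagon_arcs h = map_subgraph h ` hexagon_arcs (\<lambda>i. i)"
proof -
  have "map_subgraph h (rotation (\<lambda>i. i) c ` {0..k}, path_edges (rotation (\<lambda>i. i) c) 0 k) =
      (rotation h c ` {0..k}, path_edges (rotation h c) 0 k)" for c k
    by (simp add: map_subgraph_def rotation_def path_edges_def image_image)
  then show ?thesis unfolding hexagon_arcs_def image_image by (simp add: case_prod_beta)
qed

lemma card_subtrees_hexagon_filter:
  assumes inj: "inj_on h {0..<6}" and PQ: "\<And>A. A \<subseteq> {0..<6} \<Longrightarrow> P (h ` A) \<longleftrightarrow> Q A"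
  shows "card {t \<in> subtrees (hexagon_vertices h) (hexagon_edges h). P (fst t)} =
    card {t \<in> hexagon_arcs (\<lambda>i. i). Q (fst t)}"
proof -
  let ?A = "hexagon_arcs (\<lambda>i::nat. i)"
  have sub: "fst t \<subseteq> {0..<6}" "snd t \<subseteq> Pow {0..<6}" if "t \<in> ?A" for t
    using that by (auto simp: hexagon_arcs_def rotation_def path_edges_def)
  have "inj_on (map_subgraph h) ?A"
  proof (rule inj_onI)
    fix t t' assume t: "t \<in> ?A" "t' \<in> ?A" and eq: "map_subgraph h t = map_subgraph h t'"
    have "h ` fst t = h ` fst t'" "(`) h ` snd t = (`) h ` snd t'"
      using eq by (simp_all add: map_subgraph_def)
    then have "fst t = fst t'" "snd t = snd t'"
      using inj_on_image_eq_iff[OF inj] inj_on_image_eq_iff[OF inj_on_image_Pow[OF inj]] sub t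
      by simp_all
    then show "t = t'" by (rule prod_eqI)
  qed
  moreover have "{t \<in> ?A. P (fst (map_subgraph h t))} = {t \<in> ?A. Q (fst t)}"
    using sub(1) PQ by (auto simp: map_subgraph_def)
  moreover have "{t \<in> map_subgraph h ` ?A. P (fst t)} = map_subgraph h ` {t \<in> ?A. P (fst (map_subgraph h t))}"
    by blast
  ultimately show ?thesis
    unfolding subtrees_hexagon[OF inj] hexagon_arcs_map[of h]
    by (simp add: card_image inj_on_subset)
qed

lemma hexagon_arc_counts:
  "card (hexagon_arcs (\<lambda>i::nat. i)) = 36"
  "x < 6 \<Longrightarrow> card {t \<in> hexagon_arcs (\<lambda>i::nat. i). x \<in> fst t} = 21"
proof -
  have "card (hexagon_arcs (\<lambda>i::nat. i)) = 36 \<and>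
      (\<forall>x\<in>{0..<6}. card {t \<in> hexagon_arcs (\<lambda>i::nat. i). x \<in> fst t} = 21)"
    unfolding hexagon_arcs_def rotation_def path_edges_def by code_simp
  then show "card (hexagon_arcs (\<lambda>i::nat. i)) = 36"
    and "x < 6 \<Longrightarrow> card {t \<in> hexagon_arcs (\<lambda>i::nat. i). x \<in> fst t} = 21"
    by auto
qed

definition hexagon_pair_count :: "nat \<Rightarrow> nat" where
  "hexagon_pair_count x = card {t \<in> hexagon_arcs (\<lambda>i::nat. i). 0 \<in> fst t \<and> x \<in> fst t}"

lemma card_subtrees_hexagon:
  assumes "inj_on h {0..<6}"
  shows "card (subtrees (hexagon_vertices h) (hexagon_edges h)) = 36"
  using card_subtrees_hexagon_filter[OF assms, of "\<lambda>_. True" "\<lambda>_. True"] hexagon_arc_counts(1)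
  by simp

lemma card_subtrees_through_hexagon:
  assumes inj: "inj_on h {0..<6}" and x: "x < 6"
  shows "card (subtrees_through (hexagon_vertices h) (hexagon_edges h) (h x)) = 21"
    and "card {t \<in> subtrees_through (hexagon_vertices h) (hexagon_edges h) (h 0). h x \<in> fst t} =
      hexagon_pair_count x"
proof -
  have mem: "h y \<in> h ` A \<longleftrightarrow> y \<in> A" if "A \<subseteq> {0..<6}" "y < 6" for A y
    using inj_on_image_mem_iff[OF inj] that by simp
  show "card (subtrees_through (hexagon_vertices h) (hexagon_edges h) (h x)) = 21"
    using card_subtrees_hexagon_filter[OF inj, of "\<lambda>S. h x \<in> S" "\<lambda>A. x \<in> A"]
      mem x hexagon_arc_counts(2)[OF x]
    by (simp add: subtrees_through_def)
  show "card {t \<in> subtrees_through (hexagon_vertices h) (hexagon_edges h) (h 0). h x \<in> fst t} =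
      hexagon_pair_count x"
  proof -
    have "{t \<in> subtrees_through (hexagon_vertices h) (hexagon_edges h) (h 0). h x \<in> fst t} =
        {t \<in> subtrees (hexagon_vertices h) (hexagon_edges h). h 0 \<in> fst t \<and> h x \<in> fst t}"
      by (auto simp: subtrees_through_def)
    then show ?thesis
      using card_subtrees_hexagon_filter[OF inj,
          of "\<lambda>S. h 0 \<in> S \<and> h x \<in> S" "\<lambda>A. 0 \<in> A \<and> x \<in> A"] mem x
      by (simp add: hexagon_pair_count_def)
  qed
qed

section \<open>Attaching a pendant edge or a hexagon\<close>

lemma subtrees_edge:
  assumes "u \<noteq> w"
  shows "subtrees {u, w} {{u, w}} = {({u}, {}), ({w}, {}), ({u, w}, {{u, w}})}"
proof (intro equalityI subsetI)
  fix t assume t: "t \<in> subtrees {u, w} {{u, w}}"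
  obtain S F where t_eq: "t = (S, F)" by (cases t)
  have S: "S \<subseteq> {u, w}" "S \<noteq> {}" and F: "F \<subseteq> {{u, w}}" "\<forall>e\<in>F. e \<subseteq> S"
    and conn: "graph_connected S F"
    using t subtree_nonempty[OF t] by (auto simp: t_eq in_subtrees_iff is_tree_def)
  consider "F = {}" | "F = {{u, w}}" using F(1) by blast
  then show "t \<in> {({u}, {}), ({w}, {}), ({u, w}, {{u, w}})}"
  proof cases
    case 1
    have "adj F = {}" by (simp add: 1 adj_def)
    then have "x = y" if "x \<in> S" "y \<in> S" for x y
      using conn that by (auto simp: graph_connected_iff)
    then have "S = {u} \<or> S = {w}" using S by blast
    then show ?thesis using 1 t_eq by auto
  next
    case 2
    then have "S = {u, w}" using S F(2) by auto
    then show ?thesis using 2 t_eq by auto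
  qed
next
  fix t assume "t \<in> {({u}, {}), ({w}, {}), ({u, w}, {{u, w}})}"
  then show "t \<in> subtrees {u, w} {{u, w}}"
    using is_tree_singleton is_tree_edge[OF assms] by (auto simp: in_subtrees_iff)
qed

lemma card_subtrees_attach_pendant:
  assumes G: "simple_graph V E" and u: "u \<in> V" and w: "w \<notin> V"
  shows "card (subtrees (V \<union> {u, w}) (E \<union> {{u, w}})) =
      card (subtrees V E) + card (subtrees_through V E u) + 1"
    and "card (subtrees_through (V \<union> {u, w}) (E \<union> {{u, w}}) w) = card (subtrees_through V E u) + 1"
proof -
  have uw: "u \<noteq> w" using u w by blast
  interpret cut_vertex V E "{u, w}" "{{u, w}}" u
    using G simple_graph_edge[OF uw] u w by (simp add: cut_vertex_def cut_vertex_axioms_def)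
  have through_u: "subtrees_through {u, w} {{u, w}} u = {({u}, {}), ({u, w}, {{u, w}})}"
    using uw by (auto simp: subtrees_through_def subtrees_edge)
  have "{t \<in> subtrees {u, w} {{u, w}}. u \<notin> fst t \<and> w \<in> fst t} = {({w}, {})}"
    "{t \<in> subtrees_through {u, w} {{u, w}} u. w \<in> fst t} = {({u, w}, {{u, w}})}"
    using uw by (auto simp: through_u subtrees_edge)
  moreover have "card (subtrees {u, w} {{u, w}}) = 3" "card (subtrees_through {u, w} {{u, w}} u) = 2"
    using uw by (simp_all add: subtrees_edge through_u)
  ultimately show "card (subtrees (V \<union> {u, w}) (E \<union> {{u, w}})) =
      card (subtrees V E) + card (subtrees_through V E u) + 1"
    and "card (subtrees_through (V \<union> {u, w}) (E \<union> {{u, w}}) w) = card (subtrees_through V E u) + 1"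
    using card_subtrees_Un card_subtrees_through_Un[of w] by simp_all
qed

lemma card_subtrees_attach_hexagon:
  assumes G: "simple_graph V E" and inj: "inj_on h {0..<6}"
    and cut: "V \<inter> hexagon_vertices h = {h 0}"
  shows "card (subtrees (V \<union> hexagon_vertices h) (E \<union> hexagon_edges h)) =
      card (subtrees V E) + 15 + 20 * card (subtrees_through V E (h 0))"
    and "x < 6 \<Longrightarrow> card (subtrees_through (V \<union> hexagon_vertices h) (E \<union> hexagon_edges h) (h x)) +
      hexagon_pair_count x = 21 + card (subtrees_through V E (h 0)) * hexagon_pair_count x"
proof -
  interpret cut_vertex V E "hexagon_vertices h" "hexagon_edges h" "h 0"
    using G simple_graph_hexagon[OF inj] cut by (simp add: cut_vertex_def cut_vertex_axioms_def)
  show "card (subtrees (V \<union> hexagon_vertices h) (E \<union> hexagon_edges h)) =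
      card (subtrees V E) + 15 + 20 * card (subtrees_through V E (h 0))"
    using card_subtrees_Un card_subtrees_hexagon[OF inj] card_subtrees_through_hexagon(1)[OF inj, of 0]
    by simp
  assume x: "x < 6"
  let ?T = "subtrees_through (hexagon_vertices h) (hexagon_edges h) (h x)"
  have "{t \<in> ?T. h 0 \<in> fst t} =
      {t \<in> subtrees_through (hexagon_vertices h) (hexagon_edges h) (h 0). h x \<in> fst t}"
    "{t \<in> ?T. h 0 \<notin> fst t} =
      {t \<in> subtrees (hexagon_vertices h) (hexagon_edges h). h 0 \<notin> fst t \<and> h x \<in> fst t}"
    by (auto simp: subtrees_through_def)
  then have "card {t \<in> subtrees (hexagon_vertices h) (hexagon_edges h). h 0 \<notin> fst t \<and> h x \<in> fst t} +
      hexagon_pair_count x = 21"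
    using card_filter_split[of ?T "\<lambda>t. h 0 \<in> fst t"] G2.finite_subtrees
      card_subtrees_through_hexagon[OF inj x]
    by (simp add: subtrees_through_def)
  moreover have "h x \<in> hexagon_vertices h" using x by (simp add: hexagon_vertices_def)
  ultimately show "card (subtrees_through (V \<union> hexagon_vertices h) (E \<union> hexagon_edges h) (h x)) +
      hexagon_pair_count x = 21 + card (subtrees_through V E (h 0)) * hexagon_pair_count x"
    using card_subtrees_through_Un card_subtrees_through_hexagon(2)[OF inj x] by simp
qed

section \<open>Hexagonal chains\<close>

definition exits_admissible :: "nat list \<Rightarrow> nat \<Rightarrow> bool" where
  "exits_admissible ds N \<longleftrightarrow> (\<forall>i. 0 < i \<longrightarrow> i + 1 < N \<longrightarrow> exit_pos ds i \<in> {1, 2, 3})"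

lemma exits_admissible_choice_seqs:
  assumes "ds \<in> choice_seqs n"
  shows "exits_admissible ds n"
  unfolding exits_admissible_def
proof (intro allI impI)
  fix i assume i: "0 < i" "i + 1 < n"
  have "set ds \<subseteq> {1, 2, 3}" "i - 1 < length ds" using assms i by (auto simp: choice_seqs_def)
  then have "ds ! (i - 1) \<in> {1, 2, 3}" using nth_mem by blast
  then show "exit_pos ds i \<in> {1, 2, 3}" using i by (simp add: exit_pos_def)
qed

lemma exit_pos_less:
  assumes "exits_admissible ds N" "i + 1 < N"
  shows "exit_pos ds i < 6"
proof (cases "i = 0")
  case False
  then have "exit_pos ds i \<in> {1, 2, 3}" using assms unfolding exits_admissible_def by blast
  then show ?thesis by auto
qed (simp add: exit_pos_def)

lemma exit_pos_nonzero:
  assumes "exits_admissible ds N" "0 < i" "i + 1 < N"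
  shows "exit_pos ds i \<noteq> 0"
proof -
  have "exit_pos ds i \<in> {1, 2, 3}" using assms unfolding exits_admissible_def by blast
  then show ?thesis by auto
qed

lemma hex_vertices_0: "hex_vertices 0 = {}" and hex_edges_0: "hex_edges 0 = {}"
  by (simp_all add: hex_vertices_def hex_edges_def)

lemma hex_vertices_Suc: "hex_vertices (Suc n) = hex_vertices n \<union> hexagon_vertices (Pair n)"
  by (auto simp: hex_vertices_def hexagon_vertices_def)

lemma hex_edges_eq_image: "hex_edges n = (\<lambda>(i, j). {(i, j), (i, (j + 1) mod 6)}) ` hex_vertices n"
  by (auto simp: hex_edges_def hex_vertices_def)

lemma hex_edges_Suc: "hex_edges (Suc n) = hex_edges n \<union> hexagon_edges (Pair n)"
  unfolding hex_edges_eq_image hex_vertices_Suc image_Un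
  by (simp add: hexagon_vertices_def hexagon_edges_def image_image)

lemma inj_on_Pair: "inj_on (Pair n) A"
  by (simp add: inj_on_def)

lemma PC_one: "PC_vertices (Suc 0) ds = hexagon_vertices (Pair 0)" "PC_edges (Suc 0) ds = hexagon_edges (Pair 0)"
  using hex_vertices_Suc[of 0] hex_edges_Suc[of 0]
  by (simp_all add: PC_vertices_def PC_edges_def hex_vertices_0 hex_edges_0)

lemma PC_vertices_Suc: "PC_vertices (Suc n) ds = PC_vertices n ds \<union> hexagon_vertices (Pair n)"
  by (simp add: PC_vertices_def hex_vertices_Suc)

lemma PC_edges_Suc:
  assumes "1 \<le> n"
  shows "PC_edges (Suc n) ds =
    (PC_edges n ds \<union> {{(n - 1, exit_pos ds (n - 1)), (n, 0)}}) \<union> hexagon_edges (Pair n)"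
proof -
  have "{i. i + 1 < Suc n} = insert (n - 1) {i. i + 1 < n}" using assms by auto
  then have "{{(i, exit_pos ds i), (i + 1, 0)} | i. i + 1 < Suc n} =
      insert {(n - 1, exit_pos ds (n - 1)), (n, 0)} {{(i, exit_pos ds i), (i + 1, 0)} | i. i + 1 < n}"
    unfolding setcompr_eq_image using assms by simp
  then show ?thesis by (auto simp: PC_edges_def hex_edges_Suc)
qed

lemma PC_Suc_decomposition:
  assumes adm: "exits_admissible ds N" and n: "1 \<le> n" "n < N"
  defines "u \<equiv> (n - 1, exit_pos ds (n - 1))"
  shows "u \<in> PC_vertices n ds" and "(n, 0) \<notin> PC_vertices n ds"
    and "PC_vertices (Suc n) ds = (PC_vertices n ds \<union> {u, (n, 0)}) \<union> hexagon_vertices (Pair n)"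
    and "PC_edges (Suc n) ds = (PC_edges n ds \<union> {{u, (n, 0)}}) \<union> hexagon_edges (Pair n)"
    and "(PC_vertices n ds \<union> {u, (n, 0)}) \<inter> hexagon_vertices (Pair n) = {(n, 0)}"
proof -
  show u: "u \<in> PC_vertices n ds"
    using exit_pos_less[OF adm, of "n - 1"] n by (simp add: u_def PC_vertices_def hex_vertices_def)
  show "(n, 0) \<notin> PC_vertices n ds" by (simp add: PC_vertices_def hex_vertices_def)
  show "PC_vertices (Suc n) ds = (PC_vertices n ds \<union> {u, (n, 0)}) \<union> hexagon_vertices (Pair n)"
    using u by (auto simp: PC_vertices_Suc hexagon_vertices_def)
  show "PC_edges (Suc n) ds = (PC_edges n ds \<union> {{u, (n, 0)}}) \<union> hexagon_edges (Pair n)"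
    using PC_edges_Suc[OF n(1)] by (auto simp: u_def)
  show "(PC_vertices n ds \<union> {u, (n, 0)}) \<inter> hexagon_vertices (Pair n) = {(n, 0)}"
    using u n by (auto simp: u_def PC_vertices_def hex_vertices_def hexagon_vertices_def)
qed

lemma simple_graph_PC:
  assumes adm: "exits_admissible ds N"
  shows "n \<le> N \<Longrightarrow> simple_graph (PC_vertices n ds) (PC_edges n ds)"
proof (induction n)
  case 0
  then show ?case by (simp add: simple_graph_def PC_vertices_def PC_edges_def hex_vertices_0 hex_edges_0)
next
  case (Suc n)
  show ?case
  proof (cases "n = 0")
    case True
    then show ?thesis using simple_graph_hexagon[OF inj_on_Pair] by (simp add: PC_one)
  next
    case False
    then have n: "1 \<le> n" "n < N" using Suc.prems by auto
    have "simple_graph (PC_vertices n ds \<union> {(n - 1, exit_pos ds (n - 1)), (n, 0)})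
        (PC_edges n ds \<union> {{(n - 1, exit_pos ds (n - 1)), (n, 0)}})"
      using Suc n by (intro simple_graph_Un simple_graph_edge) auto
    then show ?thesis
      unfolding PC_Suc_decomposition[OF adm n]
      using simple_graph_hexagon[OF inj_on_Pair] by (rule simple_graph_Un)
  qed
qed

lemma PC_step:
  assumes adm: "exits_admissible ds N" and n: "1 \<le> n" "n < N"
  defines "a \<equiv> card (subtrees_through (PC_vertices n ds) (PC_edges n ds) (n - 1, exit_pos ds (n - 1)))"
  shows "card (subtrees (PC_vertices (Suc n) ds) (PC_edges (Suc n) ds)) =
      card (subtrees (PC_vertices n ds) (PC_edges n ds)) + 36 + 21 * a"
    and "x < 6 \<Longrightarrow> card (subtrees_through (PC_vertices (Suc n) ds) (PC_edges (Suc n) ds) (n, x)) +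
      hexagon_pair_count x = 21 + (a + 1) * hexagon_pair_count x"
proof -
  let ?u = "(n - 1, exit_pos ds (n - 1))"
  have G: "simple_graph (PC_vertices n ds) (PC_edges n ds)" using simple_graph_PC[OF adm] n by simp
  have G': "simple_graph (PC_vertices n ds \<union> {?u, (n, 0)}) (PC_edges n ds \<union> {{?u, (n, 0)}})"
    using G n by (intro simple_graph_Un simple_graph_edge) auto
  note pendant = card_subtrees_attach_pendant[OF G PC_Suc_decomposition(1,2)[OF adm n]]
  note hexagon = card_subtrees_attach_hexagon[OF G' inj_on_Pair PC_Suc_decomposition(5)[OF adm n]]
  show "card (subtrees (PC_vertices (Suc n) ds) (PC_edges (Suc n) ds)) =
      card (subtrees (PC_vertices n ds) (PC_edges n ds)) + 36 + 21 * a"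
    using hexagon(1) pendant by (simp add: PC_Suc_decomposition[OF adm n] a_def)
  show "x < 6 \<Longrightarrow> card (subtrees_through (PC_vertices (Suc n) ds) (PC_edges (Suc n) ds) (n, x)) +
      hexagon_pair_count x = 21 + (a + 1) * hexagon_pair_count x"
    using hexagon(2)[of x] pendant(2) by (simp add: PC_Suc_decomposition[OF adm n] a_def)
qed

lemma SC_vertices_Suc: "SC_vertices (Suc n) ds = SC_vertices n ds \<union> hexagon_vertices (\<lambda>j. spiro_map ds (n, j))"
  by (simp add: SC_vertices_def hex_vertices_Suc hexagon_vertices_def image_Un image_image)

lemma SC_edges_Suc: "SC_edges (Suc n) ds = SC_edges n ds \<union> hexagon_edges (\<lambda>j. spiro_map ds (n, j))"
  by (simp add: SC_edges_def hex_edges_Suc hexagon_edges_def image_Un image_image)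

lemma SC_one:
  "SC_vertices (Suc 0) ds = hexagon_vertices (\<lambda>j. spiro_map ds (0, j))"
  "SC_edges (Suc 0) ds = hexagon_edges (\<lambda>j. spiro_map ds (0, j))"
  using SC_vertices_Suc[of 0] SC_edges_Suc[of 0]
  by (simp_all add: SC_vertices_def SC_edges_def hex_vertices_0 hex_edges_0)

lemma inj_on_spiro_map: "inj_on (\<lambda>j. spiro_map ds (n, j)) {0..<6}"
  by (auto simp: inj_on_def spiro_map_def split: if_splits)

lemma simple_graph_SC: "simple_graph (SC_vertices n ds) (SC_edges n ds)"
proof (induction n)
  case 0
  then show ?case by (simp add: simple_graph_def SC_vertices_def SC_edges_def hex_vertices_0 hex_edges_0)
next
  case (Suc n)
  show ?case
    unfolding SC_vertices_Suc SC_edges_Suc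
    using Suc.IH simple_graph_hexagon[OF inj_on_spiro_map] by (rule simple_graph_Un)
qed

lemma SC_vertices_subset:
  assumes adm: "exits_admissible ds N" and "n \<le> N"
  shows "SC_vertices n ds \<subseteq> hex_vertices n"
proof
  fix v assume "v \<in> SC_vertices n ds"
  then obtain i j where ij: "i < n" "j < 6" "v = spiro_map ds (i, j)"
    by (auto simp: SC_vertices_def hex_vertices_def)
  show "v \<in> hex_vertices n"
  proof (cases "j = 0 \<and> 0 < i")
    case True
    then have "exit_pos ds (i - 1) < 6" using exit_pos_less[OF adm, of "i - 1"] ij assms(2) by simp
    then show ?thesis using ij True by (auto simp: spiro_map_def hex_vertices_def)
  next
    case False
    then show ?thesis using ij by (auto simp: spiro_map_def hex_vertices_def)
  qed
qed

lemma spiro_map_attach: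
  assumes adm: "exits_admissible ds N" and n: "1 \<le> n" "n < N"
  shows "spiro_map ds (n, 0) = spiro_map ds (n - 1, exit_pos ds (n - 1))"
proof (cases "n = 1")
  case False
  then have "exit_pos ds (n - 1) \<noteq> 0" using exit_pos_nonzero[OF adm, of "n - 1"] n by simp
  then show ?thesis using n by (simp add: spiro_map_def)
qed (simp add: spiro_map_def)

lemma SC_cut_vertex:
  assumes adm: "exits_admissible ds N" and n: "1 \<le> n" "n < N"
  shows "SC_vertices n ds \<inter> hexagon_vertices (\<lambda>j. spiro_map ds (n, j)) = {spiro_map ds (n, 0)}"
proof
  have sub: "SC_vertices n ds \<subseteq> hex_vertices n" using SC_vertices_subset[OF adm] n by simp
  show "SC_vertices n ds \<inter> hexagon_vertices (\<lambda>j. spiro_map ds (n, j)) \<subseteq> {spiro_map ds (n, 0)}"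
  proof
    fix v assume v: "v \<in> SC_vertices n ds \<inter> hexagon_vertices (\<lambda>j. spiro_map ds (n, j))"
    then obtain j where j: "j < 6" "v = spiro_map ds (n, j)" by (auto simp: hexagon_vertices_def)
    have "fst v < n" using v sub by (auto simp: hex_vertices_def)
    then have "j = 0" using j n by (auto simp: spiro_map_def split: if_splits)
    then show "v \<in> {spiro_map ds (n, 0)}" using j by simp
  qed
  have "(n - 1, exit_pos ds (n - 1)) \<in> hex_vertices n"
    using exit_pos_less[OF adm, of "n - 1"] n by (simp add: hex_vertices_def)
  then have "spiro_map ds (n, 0) \<in> SC_vertices n ds"
    unfolding spiro_map_attach[OF adm n] SC_vertices_def by blast
  moreover have "spiro_map ds (n, 0) \<in> hexagon_vertices (\<lambda>j. spiro_map ds (n, j))"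
    by (simp add: hexagon_vertices_def)
  ultimately show "{spiro_map ds (n, 0)} \<subseteq> SC_vertices n ds \<inter> hexagon_vertices (\<lambda>j. spiro_map ds (n, j))"
    by simp
qed

lemma SC_step:
  assumes adm: "exits_admissible ds N" and n: "1 \<le> n" "n < N"
  defines "b \<equiv> card (subtrees_through (SC_vertices n ds) (SC_edges n ds)
    (spiro_map ds (n - 1, exit_pos ds (n - 1))))"
  shows "card (subtrees (SC_vertices (Suc n) ds) (SC_edges (Suc n) ds)) =
      card (subtrees (SC_vertices n ds) (SC_edges n ds)) + 15 + 20 * b"
    and "x < 6 \<Longrightarrow> card (subtrees_through (SC_vertices (Suc n) ds) (SC_edges (Suc n) ds) (spiro_map ds (n, x))) +
      hexagon_pair_count x = 21 + b * hexagon_pair_count x"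
  using card_subtrees_attach_hexagon[OF simple_graph_SC inj_on_spiro_map SC_cut_vertex[OF adm n]]
  unfolding b_def spiro_map_attach[OF adm n, symmetric] SC_vertices_Suc SC_edges_Suc
  by simp_all

lemma chain_subtree_invariant:
  assumes adm: "exits_admissible ds N"
  shows "1 \<le> n \<Longrightarrow> n \<le> N \<Longrightarrow>
    441 * card (subtrees (SC_vertices n ds) (SC_edges n ds)) =
      400 * card (subtrees (PC_vertices n ds) (PC_edges n ds)) + 1035 * n + 441 \<and>
    (\<forall>x<6. 21 * card (subtrees_through (SC_vertices n ds) (SC_edges n ds) (spiro_map ds (n - 1, x))) =
      20 * card (subtrees_through (PC_vertices n ds) (PC_edges n ds) (n - 1, x)) + 21)"
proof (induction n rule: nat_induct_at_least)
  case base
  then show ?case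
    using card_subtrees_through_hexagon(1)[OF inj_on_spiro_map[of ds 0]]
    by (simp add: PC_one SC_one card_subtrees_hexagon card_subtrees_through_hexagon(1)
        inj_on_Pair inj_on_spiro_map)
next
  case (Suc n)
  then have n: "1 \<le> n" "n < N" by auto
  define a where "a = card (subtrees_through (PC_vertices n ds) (PC_edges n ds) (n - 1, exit_pos ds (n - 1)))"
  define b where "b = card (subtrees_through (SC_vertices n ds) (SC_edges n ds)
    (spiro_map ds (n - 1, exit_pos ds (n - 1))))"
  have IH: "441 * card (subtrees (SC_vertices n ds) (SC_edges n ds)) =
      400 * card (subtrees (PC_vertices n ds) (PC_edges n ds)) + 1035 * n + 441"
    "21 * b = 20 * a + 21"
    using Suc.IH n exit_pos_less[OF adm, of "n - 1"] by (simp_all add: a_def b_def)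
  note PC = PC_step[OF adm n, folded a_def] and SC = SC_step[OF adm n, folded b_def]
  have "441 * card (subtrees (SC_vertices (Suc n) ds) (SC_edges (Suc n) ds)) =
      400 * card (subtrees (PC_vertices (Suc n) ds) (PC_edges (Suc n) ds)) + 1035 * Suc n + 441"
    using PC(1) SC(1) IH by simp
  moreover have "21 * card (subtrees_through (SC_vertices (Suc n) ds) (SC_edges (Suc n) ds) (spiro_map ds (n, x))) =
      20 * card (subtrees_through (PC_vertices (Suc n) ds) (PC_edges (Suc n) ds) (n, x)) + 21"
    if x: "x < 6" for x
  proof -
    have "21 * (b * hexagon_pair_count x) = 20 * (a * hexagon_pair_count x) + 21 * hexagon_pair_count x"
      using IH(2) by (metis add_mult_distrib mult.assoc)
    then show ?thesis using PC(2)[OF x] SC(2)[OF x] by (simp add: algebra_simps)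
  qed
  ultimately show ?case by simp
qed

lemma STN_chain_identity:
  assumes "ds \<in> choice_seqs n" "1 \<le> n"
  shows "400 * real (STN (PC_vertices n ds) (PC_edges n ds)) =
    441 * real (STN (SC_vertices n ds) (SC_edges n ds)) - 1035 * real n - 441"
proof -
  have "441 * card (subtrees (SC_vertices n ds) (SC_edges n ds)) =
      400 * card (subtrees (PC_vertices n ds) (PC_edges n ds)) + 1035 * n + 441"
    using chain_subtree_invariant[OF exits_admissible_choice_seqs[OF assms(1)] assms(2)] by simp
  then have "441 * real (card (subtrees (SC_vertices n ds) (SC_edges n ds))) =
      400 * real (card (subtrees (PC_vertices n ds) (PC_edges n ds))) + 1035 * real n + 441"
    by (metis (mono_tags, lifting) of_nat_add of_nat_mult of_nat_numeral)
  then show ?thesis by (simp add: STN_eq_card_subtrees)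
qed

lemma sum_seq_prob: "(\<Sum>ds\<in>{ds. length ds = m \<and> set ds \<subseteq> {1, 2, 3}}. seq_prob p1 p2 ds) = 1"
proof (induction m)
  case 0
  have "{ds. length ds = 0 \<and> set ds \<subseteq> {1, 2, 3::nat}} = {[]}" by auto
  then show ?case by (simp add: seq_prob_def)
next
  case (Suc m)
  let ?D = "{1, 2, 3::nat}" and ?M = "{ds. length ds = m \<and> set ds \<subseteq> {1, 2, 3}}"
  have lists: "{ds. length ds = Suc m \<and> set ds \<subseteq> ?D} = (\<lambda>(d, ds). d # ds) ` (?D \<times> ?M)"
    by (auto simp: length_Suc_conv)
  have inj: "inj_on (\<lambda>(d, ds). d # ds) (?D \<times> ?M)" by (auto simp: inj_on_def)
  have "(\<Sum>ds | length ds = Suc m \<and> set ds \<subseteq> ?D. seq_prob p1 p2 ds) =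
      (\<Sum>(d, ds)\<in>?D \<times> ?M. step_prob p1 p2 d * seq_prob p1 p2 ds)"
    unfolding lists sum.reindex[OF inj] by (rule sum.cong) (auto simp: seq_prob_def)
  also have "\<dots> = (\<Sum>d\<in>?D. step_prob p1 p2 d * (\<Sum>ds\<in>?M. seq_prob p1 p2 ds))"
    by (simp add: sum.cartesian_product[symmetric] sum_distrib_left)
  finally show ?case using Suc.IH by (simp add: step_prob_def)
qed

theorem theorem6:
  fixes p1 p2 :: real and n :: nat
  assumes "p1 \<ge> 0" and "p2 \<ge> 0" and "p1 + p2 \<le> 1" and "n \<ge> 1"
  shows "400 * E_STN_RPC n p1 p2 = 441 * E_STN_RSC n p1 p2 - 1035 * real n - 441"
proof -
  have total: "(\<Sum>ds\<in>choice_seqs n. seq_prob p1 p2 ds) = 1"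
    unfolding choice_seqs_def by (rule sum_seq_prob)
  have "400 * E_STN_RPC n p1 p2 =
      (\<Sum>ds\<in>choice_seqs n. seq_prob p1 p2 ds * (441 * real (STN (SC_vertices n ds) (SC_edges n ds)) - 1035 * real n - 441))"
    unfolding E_STN_RPC_def sum_distrib_left
    by (rule sum.cong) (simp_all add: STN_chain_identity[OF _ assms(4), symmetric])
  also have "\<dots> = (\<Sum>ds\<in>choice_seqs n.
      441 * (seq_prob p1 p2 ds * real (STN (SC_vertices n ds) (SC_edges n ds))) -
      (1035 * real n + 441) * seq_prob p1 p2 ds)"
    by (rule sum.cong) (simp_all add: algebra_simps)
  also have "\<dots> = 441 * E_STN_RSC n p1 p2 - (1035 * real n + 441) * (\<Sum>ds\<in>choice_seqs n. seq_prob p1 p2 ds)"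
    unfolding E_STN_RSC_def by (simp only: sum_subtractf sum_distrib_left)
  finally show ?thesis using total by simp
qed

end
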